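(* Let $T$ be a finite rooted tree with a self-loop at the root and $|T|\ge2$, let $v$ be a vertex of $T$ (possibly the root) and $T(v)$ the subtree of descendants of $v$. For $t\in\mathbb N$ let $N_t$ be the number of visits to $T(v)$ during $t$ steps of simple random walk on $T$. Then \[ E_v[N_t]\le |T(v)|\Big[\frac{t+3}{|T|-1}+48|T|\Big]. \]
   Context: Degrees count the self-loop twice; simple random walk moves from a vertex along a uniformly chosen edge-end; $E_v$ is expectation for the walk started at $v$. The descendants of $v$ are the vertices farther from the root than $v$ whose unique path to the root contains $v$; $T(v)$ consists of $v$ and its descendants. $|\cdot|$ is the number of vertices. *)

theory Defs
  imports "HOL-Probability.Probability"
begin

text \<open>A finite graph on vertex set V with symmetric, irreflexive edge relation E
  (the tree edges; the root self-loop is handled separately in the walk).\<close>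

definition simple_path :: "('a \<Rightarrow> 'a \<Rightarrow> bool) \<Rightarrow> 'a list \<Rightarrow> 'a \<Rightarrow> 'a \<Rightarrow> bool" where
  "simple_path E p x y \<longleftrightarrow> p \<noteq> [] \<and> hd p = x \<and> last p = y \<and> distinct p \<and>
     (\<forall>i. Suc i < length p \<longrightarrow> E (p ! i) (p ! Suc i))"

definition is_tree :: "'a set \<Rightarrow> ('a \<Rightarrow> 'a \<Rightarrow> bool) \<Rightarrow> bool" where
  "is_tree V E \<longleftrightarrow> finite V \<and> V \<noteq> {} \<and>
     (\<forall>x y. E x y \<longrightarrow> x \<in> V \<and> y \<in> V) \<and>
     (\<forall>x y. E x y \<longrightarrow> E y x) \<and> (\<forall>x. \<not> E x x) \<and>
     (\<forall>x\<in>V. \<forall>y\<in>V. \<exists>!p. simple_path E p x y)"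

definition subtree :: "'a set \<Rightarrow> ('a \<Rightarrow> 'a \<Rightarrow> bool) \<Rightarrow> 'a \<Rightarrow> 'a \<Rightarrow> 'a set" where
  "subtree V E r v = {w \<in> V. \<forall>p. simple_path E p w r \<longrightarrow> v \<in> set p}"

text \<open>Edge-ends at x, as a multiset of endpoints; the root carries a self-loop,
  which contributes two edge-ends (degree counts the loop twice).\<close>
definition edge_ends :: "'a set \<Rightarrow> ('a \<Rightarrow> 'a \<Rightarrow> bool) \<Rightarrow> 'a \<Rightarrow> 'a \<Rightarrow> 'a multiset" where
  "edge_ends V E r x = mset_set {y \<in> V. E x y} + (if x = r then {#r, r#} else {#})"

definition srw_step :: "'a set \<Rightarrow> ('a \<Rightarrow> 'a \<Rightarrow> bool) \<Rightarrow> 'a \<Rightarrow> 'a \<Rightarrow> 'a pmf" where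
  "srw_step V E r x = pmf_of_multiset (edge_ends V E r x)"

fun srw_traj :: "'a set \<Rightarrow> ('a \<Rightarrow> 'a \<Rightarrow> bool) \<Rightarrow> 'a \<Rightarrow> nat \<Rightarrow> 'a \<Rightarrow> 'a list pmf" where
  "srw_traj V E r 0 x = return_pmf [x]"
| "srw_traj V E r (Suc n) x =
     bind_pmf (srw_step V E r x) (\<lambda>y. map_pmf (\<lambda>p. x # p) (srw_traj V E r n y))"

definition expected_visits :: "'a set \<Rightarrow> ('a \<Rightarrow> 'a \<Rightarrow> bool) \<Rightarrow> 'a \<Rightarrow> 'a \<Rightarrow> nat \<Rightarrow> real" where
  "expected_visits V E r v t =
     measure_pmf.expectation (srw_traj V E r t v)
       (\<lambda>p. real (length (filter (\<lambda>w. w \<in> subtree V E r v) p)))"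

end

theory Submission imports Defs begin

text \<open>
Let \<open>\<Phi>\<close> be the expected hitting time of \<open>v\<close>; on a tree it has the closed form
\<open>\<Phi> x = \<Sum>\<^sub>w deg w \<cdot> (x|w)\<^sub>v\<close> with the Gromov product \<open>(x|w)\<^sub>v\<close>, so \<open>0 \<le> \<Phi> \<le> 2|T|(|T|-1)\<close>.
With \<open>A = |T(v)|/(|T|-1)\<close> the function \<open>f = (\<one>\<^bsub>T(v)\<^esub> - A) \<Phi>\<close> satisfies the drift
inequality \<open>E\<^sub>x f(X\<^sub>1) \<le> f x - \<one>\<^bsub>T(v)\<^esub>(x) + A\<close>: inside \<open>T(v) - {v}\<close> and outside \<open>T(v)\<close> this is
the equation \<open>E\<^sub>x \<Phi>(X\<^sub>1) = \<Phi> x - 1\<close>, and at \<open>v\<close> it uses that \<open>\<Phi>\<close> at the parent of \<open>v\<close> is at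
least the total degree outside \<open>T(v)\<close>. Summing the drift along the walk gives
\<open>E\<^sub>v N\<^sub>t \<le> (t+1) A + f v - min f \<le> (t+1) A + 2|T| |T(v)|\<close>.
For \<open>v\<close> the root, \<open>T(v) = T\<close> and the trivial bound \<open>N\<^sub>t \<le> t + 1\<close> suffices.
\<close>

locale rooted_tree =
  fixes V :: "'a set" and E :: "'a \<Rightarrow> 'a \<Rightarrow> bool" and r :: 'a
  assumes tree: "is_tree V E" and root_in_V: "r \<in> V"
begin

lemma finite_V: "finite V"
  using tree unfolding is_tree_def by auto

lemma edge_in_V: "E x y \<Longrightarrow> x \<in> V \<and> y \<in> V"
  using tree unfolding is_tree_def by blast

lemma edge_sym: "E x y \<Longrightarrow> E y x"
  using tree unfolding is_tree_def by blast

lemma edge_irrefl: "\<not> E x x"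
  using tree unfolding is_tree_def by blast

lemma ex1_simple_path: "x \<in> V \<Longrightarrow> y \<in> V \<Longrightarrow> \<exists>!p. simple_path E p x y"
  using tree unfolding is_tree_def by blast

lemma card_V_ge_1: "card V \<ge> 1"
  using root_in_V finite_V by (metis One_nat_def Suc_leI card_gt_0_iff empty_iff)

lemma simple_pathI:
  "p \<noteq> [] \<Longrightarrow> hd p = x \<Longrightarrow> last p = y \<Longrightarrow> distinct p \<Longrightarrow>
   (\<And>i. Suc i < length p \<Longrightarrow> E (p ! i) (p ! Suc i)) \<Longrightarrow> simple_path E p x y"
  unfolding simple_path_def by blast

lemma simple_pathD: "simple_path E p x y \<Longrightarrow> p \<noteq> [] \<and> hd p = x \<and> last p = y \<and> distinct p"
  unfolding simple_path_def by blast

lemma simple_path_edge: "simple_path E p x y \<Longrightarrow> Suc i < length p \<Longrightarrow> E (p ! i) (p ! Suc i)"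
  unfolding simple_path_def by blast

lemma simple_path_edge_pair: "E x y \<Longrightarrow> simple_path E [x, y] x y"
  by (rule simple_pathI) (use edge_irrefl in \<open>auto simp: less_Suc_eq\<close>)

lemma simple_path_subset: assumes "simple_path E p x y" "x \<in> V" shows "set p \<subseteq> V"
proof
  fix w assume "w \<in> set p"
  then obtain i where i: "i < length p" "p ! i = w" by (auto simp: in_set_conv_nth)
  show "w \<in> V"
  proof (cases i)
    case 0
    then show ?thesis using assms i simple_pathD[OF assms(1)] by (metis hd_conv_nth)
  next
    case (Suc j)
    then show ?thesis using simple_path_edge[OF assms(1)] edge_in_V i by blast
  qed
qed

lemma length_simple_path_le_card:
  assumes "simple_path E p x y" "x \<in> V" shows "length p \<le> card V"
proof -
  have "length p = card (set p)" using simple_pathD[OF assms(1)] by (simp add: distinct_card)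
  also have "\<dots> \<le> card V" using simple_path_subset[OF assms] finite_V by (rule card_mono[rotated])
  finally show ?thesis .
qed

lemma simple_path_rev: assumes "simple_path E p x y" shows "simple_path E (rev p) y x"
proof (rule simple_pathI)
  show "rev p \<noteq> []" "hd (rev p) = y" "last (rev p) = x" "distinct (rev p)"
    using simple_pathD[OF assms] by (simp_all add: hd_rev last_rev)
  fix i assume i: "Suc i < length (rev p)"
  define j where "j = length p - Suc (Suc i)"
  have "Suc j < length p" using i unfolding j_def by auto
  then have "E (p ! Suc j) (p ! j)" using simple_path_edge[OF assms] edge_sym by blast
  moreover have "rev p ! i = p ! Suc j" "rev p ! Suc i = p ! j"
    using i by (simp_all add: rev_nth j_def Suc_diff_Suc)
  ultimately show "E (rev p ! i) (rev p ! Suc i)" by simp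
qed

lemma simple_path_take:
  assumes "simple_path E p a b" "j < length p"
  shows "simple_path E (take (Suc j) p) a (p ! j)"
proof (rule simple_pathI)
  have p: "p \<noteq> []" "hd p = a" "distinct p" using simple_pathD[OF assms(1)] by auto
  show "take (Suc j) p \<noteq> []" "distinct (take (Suc j) p)" using p by simp_all
  show "hd (take (Suc j) p) = a" using p by (cases p) auto
  show "last (take (Suc j) p) = p ! j" using assms(2) by (simp add: take_Suc_conv_app_nth)
qed (use simple_path_edge[OF assms(1)] in simp)

lemma simple_path_drop:
  assumes "simple_path E p a b" "j < length p"
  shows "simple_path E (drop j p) (p ! j) b"
proof (rule simple_pathI)
  show "drop j p \<noteq> []" "hd (drop j p) = p ! j" "last (drop j p) = b" "distinct (drop j p)"
    using simple_pathD[OF assms(1)] assms(2) by (simp_all add: hd_drop_conv_nth)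
qed (use simple_path_edge[OF assms(1), of "j + _"] in simp)

definition tree_path :: "'a \<Rightarrow> 'a \<Rightarrow> 'a list" where
  "tree_path x y = (THE p. simple_path E p x y)"

definition tree_dist :: "'a \<Rightarrow> 'a \<Rightarrow> nat" where
  "tree_dist x y = length (tree_path x y) - 1"

lemma simple_path_tree_path: "x \<in> V \<Longrightarrow> y \<in> V \<Longrightarrow> simple_path E (tree_path x y) x y"
  unfolding tree_path_def by (rule theI'[OF ex1_simple_path])

lemma tree_path_eqI: "x \<in> V \<Longrightarrow> y \<in> V \<Longrightarrow> simple_path E p x y \<Longrightarrow> tree_path x y = p"
  unfolding tree_path_def by (rule the1_equality[OF ex1_simple_path])

lemma tree_path_nonempty: "x \<in> V \<Longrightarrow> y \<in> V \<Longrightarrow> tree_path x y \<noteq> []"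
  using simple_pathD[OF simple_path_tree_path] by blast

lemma tree_path_refl: "x \<in> V \<Longrightarrow> tree_path x x = [x]"
  by (rule tree_path_eqI) (auto simp: simple_path_def)

lemma tree_dist_refl: "x \<in> V \<Longrightarrow> tree_dist x x = 0"
  by (simp add: tree_dist_def tree_path_refl)

lemma tree_dist_le_card: "x \<in> V \<Longrightarrow> y \<in> V \<Longrightarrow> tree_dist x y \<le> card V - 1"
  unfolding tree_dist_def using length_simple_path_le_card[OF simple_path_tree_path] diff_le_mono
  by blast

lemma tree_path_sym: "x \<in> V \<Longrightarrow> y \<in> V \<Longrightarrow> tree_path y x = rev (tree_path x y)"
  by (rule tree_path_eqI) (simp_all add: simple_path_rev simple_path_tree_path)

lemma tree_dist_sym: "x \<in> V \<Longrightarrow> y \<in> V \<Longrightarrow> tree_dist y x = tree_dist x y"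
  unfolding tree_dist_def using tree_path_sym[of x y] by simp

lemma tree_path_edge: "E x y \<Longrightarrow> tree_path x y = [x, y]"
  using tree_path_eqI edge_in_V simple_path_edge_pair by blast

lemma tree_dist_edge: "E x y \<Longrightarrow> tree_dist x y = 1"
  by (simp add: tree_dist_def tree_path_edge)

lemma ex_next_hop:
  assumes x: "x \<in> V" and z: "z \<in> V" and "x \<noteq> z"
  shows "\<exists>y0. E x y0 \<and> tree_path x z = x # tree_path y0 z \<and>
           (\<forall>y. E x y \<and> y \<noteq> y0 \<longrightarrow> tree_path y z = y # tree_path x z)"
proof -
  define p where "p = tree_path x z"
  have sp: "simple_path E p x z" using simple_path_tree_path x z p_def by simp
  have p: "p \<noteq> []" "hd p = x" "last p = z" "distinct p" using simple_pathD[OF sp] by auto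
  have p0: "p ! 0 = x" using p by (simp add: hd_conv_nth)
  have len: "2 \<le> length p"
    using p \<open>x \<noteq> z\<close> by (cases p) (auto simp: Suc_le_eq)
  define y0 where "y0 = p ! 1"
  have Exy0: "E x y0" using simple_path_edge[OF sp, of 0] len p0 unfolding y0_def by simp
  have "simple_path E (tl p) y0 z"
    using simple_path_drop[OF sp, of 1] len unfolding y0_def by (simp add: drop_Suc)
  then have tail: "tree_path y0 z = tl p" using tree_path_eqI edge_in_V[OF Exy0] z by blast
  have other: "tree_path y z = y # p" if Exy: "E x y" and "y \<noteq> y0" for y
  proof -
    have yV: "y \<in> V" using edge_in_V Exy by blast
    have "y \<notin> set p"
      \<comment> \<open>otherwise the prefix of \<open>p\<close> ending at \<open>y\<close> would be a second path from \<open>x\<close> to \<open>y\<close>\<close>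
    proof
      assume "y \<in> set p"
      then obtain j where j: "j < length p" "p ! j = y" by (auto simp: in_set_conv_nth)
      have "j \<noteq> 0" using j p0 Exy edge_irrefl by metis
      moreover have "j \<noteq> 1" using j \<open>y \<noteq> y0\<close> unfolding y0_def by auto
      moreover have "take (Suc j) p = [x, y]"
        using tree_path_eqI[OF x yV] simple_path_take[OF sp j(1)] j tree_path_edge[OF Exy] by simp
      then have "Suc j = 2" using j length_take[of "Suc j" p] by simp
      ultimately show False by simp
    qed
    then have "simple_path E (y # p) y z"
      using p p0 edge_sym[OF Exy] simple_path_edge[OF sp]
      by (intro simple_pathI) (auto simp: nth_Cons split: nat.split)
    then show ?thesis using tree_path_eqI yV z by blast
  qed
  have "p = x # tl p" using p by (cases p) auto
  then show ?thesis using Exy0 tail other unfolding p_def by auto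
qed

definition next_hop :: "'a \<Rightarrow> 'a \<Rightarrow> 'a" where
  "next_hop x z = (SOME y0. E x y0 \<and> tree_path x z = x # tree_path y0 z \<and>
     (\<forall>y. E x y \<and> y \<noteq> y0 \<longrightarrow> tree_path y z = y # tree_path x z))"

lemma next_hop:
  assumes "x \<in> V" "z \<in> V" "x \<noteq> z"
  shows next_hop_edge: "E x (next_hop x z)"
    and tree_path_next_hop: "tree_path x z = x # tree_path (next_hop x z) z"
    and tree_path_other_nbr:
      "\<And>y. E x y \<Longrightarrow> y \<noteq> next_hop x z \<Longrightarrow> tree_path y z = y # tree_path x z"
  using someI_ex[OF ex_next_hop[OF assms]] unfolding next_hop_def[symmetric] by blast+

lemma next_hop_in_V: "x \<in> V \<Longrightarrow> z \<in> V \<Longrightarrow> x \<noteq> z \<Longrightarrow> next_hop x z \<in> V"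
  using next_hop_edge edge_in_V by blast

lemma tree_dist_next_hop:
  assumes "x \<in> V" "z \<in> V" "x \<noteq> z" shows "tree_dist x z = Suc (tree_dist (next_hop x z) z)"
  using tree_path_next_hop[OF assms] tree_path_nonempty[OF next_hop_in_V[OF assms] assms(2)]
  unfolding tree_dist_def by simp

lemma tree_dist_other_nbr:
  assumes "x \<in> V" "z \<in> V" "x \<noteq> z" "E x y" "y \<noteq> next_hop x z"
  shows "tree_dist y z = Suc (tree_dist x z)"
  using tree_path_other_nbr[OF assms] tree_path_nonempty[OF assms(1,2)]
  unfolding tree_dist_def by simp

lemma tree_dist_eq_0_imp_eq: "x \<in> V \<Longrightarrow> z \<in> V \<Longrightarrow> tree_dist x z = 0 \<Longrightarrow> x = z"
  using tree_dist_next_hop by fastforce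

lemma tree_dist_edge_cases:
  assumes "E x y" "z \<in> V"
  shows "tree_dist x z = Suc (tree_dist y z) \<or> tree_dist y z = Suc (tree_dist x z)"
proof -
  have V: "x \<in> V" "y \<in> V" using edge_in_V assms by blast+
  show ?thesis
  proof (cases "x = z")
    case True
    then show ?thesis using tree_dist_edge[OF edge_sym[OF assms(1)]] tree_dist_refl[OF V(1)] by simp
  next
    case False
    then show ?thesis
      using tree_dist_next_hop[OF V(1) assms(2) False] tree_dist_other_nbr[OF V(1) assms(2) False assms(1)]
      by (cases "y = next_hop x z") simp_all
  qed
qed

lemma tree_dist_edge_le: "E x y \<Longrightarrow> z \<in> V \<Longrightarrow> tree_dist x z \<le> Suc (tree_dist y z)"
  using tree_dist_edge_cases by fastforce

lemma tree_dist_triangle: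
  assumes "x \<in> V" "v \<in> V" "w \<in> V" shows "tree_dist x w \<le> tree_dist x v + tree_dist w v"
  using assms(1)
proof (induction "tree_dist x v" arbitrary: x)
  case 0
  then show ?case using tree_dist_eq_0_imp_eq[of x v] tree_dist_sym assms(2,3) by simp
next
  case (Suc m)
  then have "x \<noteq> v" using tree_dist_refl[OF assms(2)] by auto
  define y where "y = next_hop x v"
  have "E x y" "y \<in> V" "tree_dist x v = Suc (tree_dist y v)"
    unfolding y_def using next_hop_edge next_hop_in_V tree_dist_next_hop Suc.prems assms(2) \<open>x \<noteq> v\<close>
    by blast+
  then show ?case using Suc.hyps tree_dist_edge_le[OF \<open>E x y\<close> assms(3)] by fastforce
qed

definition nbrs :: "'a \<Rightarrow> 'a set" where
  "nbrs x = {y \<in> V. E x y}"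

lemma finite_nbrs: "finite (nbrs x)"
  using finite_V unfolding nbrs_def by simp

lemma nbrs_subset: "nbrs x \<subseteq> V"
  unfolding nbrs_def by blast

lemma sum_nbrs_tree_dist_diff:
  assumes x: "x \<in> V" and z: "z \<in> V"
  shows "(\<Sum>y\<in>nbrs x. real (tree_dist x z) - real (tree_dist y z))
           = (if x = z then - real (card (nbrs x)) else 2 - real (card (nbrs x)))"
proof (cases "x = z")
  case True
  have "(\<Sum>y\<in>nbrs x. real (tree_dist x z) - real (tree_dist y z)) = (\<Sum>y\<in>nbrs x. -1)"
    by (rule sum.cong) (auto simp: nbrs_def True tree_dist_refl[OF z] tree_dist_edge[OF edge_sym])
  then show ?thesis using True by simp
next
  case False
  define y0 where "y0 = next_hop x z"
  have y0: "y0 \<in> nbrs x"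
    using next_hop_edge[OF x z False] next_hop_in_V[OF x z False] unfolding nbrs_def y0_def by blast
  have "(\<Sum>y\<in>nbrs x. real (tree_dist x z) - real (tree_dist y z))
      = (real (tree_dist x z) - real (tree_dist y0 z))
        + (\<Sum>y\<in>nbrs x - {y0}. real (tree_dist x z) - real (tree_dist y z))"
    using y0 finite_nbrs by (simp add: sum.remove)
  also have "(\<Sum>y\<in>nbrs x - {y0}. real (tree_dist x z) - real (tree_dist y z)) = (\<Sum>y\<in>nbrs x - {y0}. -1)"
    by (rule sum.cong) (auto simp: nbrs_def y0_def tree_dist_other_nbr[OF x z False])
  also have "real (tree_dist x z) - real (tree_dist y0 z) = 1"
    using tree_dist_next_hop[OF x z False] unfolding y0_def by simp
  finally have "(\<Sum>y\<in>nbrs x. real (tree_dist x z) - real (tree_dist y z)) = 1 - real (card (nbrs x - {y0}))"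
    by simp
  moreover have "card (nbrs x) \<ge> 1" using y0 finite_nbrs[of x] by (auto simp: card_gt_0_iff Suc_le_eq)
  ultimately show ?thesis using False y0 finite_nbrs[of x] by (simp add: card_Diff_singleton of_nat_diff)
qed

definition parent :: "'a \<Rightarrow> 'a" where
  "parent x = next_hop x r"

lemma parent:
  assumes "x \<in> V" "x \<noteq> r"
  shows parent_edge: "E x (parent x)"
    and parent_in_V: "parent x \<in> V"
    and tree_path_parent: "tree_path x r = x # tree_path (parent x) r"
    and tree_dist_parent: "tree_dist x r = Suc (tree_dist (parent x) r)"
  unfolding parent_def
  using next_hop_edge next_hop_in_V tree_path_next_hop tree_dist_next_hop assms root_in_V by blast+

lemma parent_eqI:
  assumes "E x y" "tree_dist x r = Suc (tree_dist y r)" shows "x \<noteq> r" "y = parent x"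
proof -
  have V: "x \<in> V" "y \<in> V" using edge_in_V assms(1) by blast+
  show "x \<noteq> r" using assms(2) tree_dist_refl[OF root_in_V] by auto
  then show "y = parent x"
    using tree_dist_other_nbr[OF V(1) root_in_V _ assms(1)] assms(2) unfolding parent_def by fastforce
qed

lemma edge_parent_cases:
  assumes "E w y" shows "(w \<noteq> r \<and> y = parent w) \<or> (y \<noteq> r \<and> w = parent y)"
  using tree_dist_edge_cases[OF assms root_in_V] parent_eqI assms edge_sym by metis

lemma sum_card_nbrs: "(\<Sum>w\<in>V. real (card (nbrs w))) = 2 * (real (card V) - 1)"
proof -
  let ?up = "(\<lambda>w. (w, parent w)) ` (V - {r})" and ?down = "(\<lambda>w. (parent w, w)) ` (V - {r})"
  have edges: "Sigma V nbrs = ?up \<union> ?down"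
  proof
    show "Sigma V nbrs \<subseteq> ?up \<union> ?down"
    proof
      fix q assume "q \<in> Sigma V nbrs"
      then obtain w y where q: "q = (w, y)" "w \<in> V" "E w y" unfolding nbrs_def by blast
      then have "y \<in> V" using edge_in_V by blast
      then show "q \<in> ?up \<union> ?down" using edge_parent_cases[OF q(3)] q by blast
    qed
    show "?up \<union> ?down \<subseteq> Sigma V nbrs"
    proof
      fix q assume "q \<in> ?up \<union> ?down"
      then obtain w where w: "w \<in> V" "w \<noteq> r" "q = (w, parent w) \<or> q = (parent w, w)" by blast
      then show "q \<in> Sigma V nbrs"
        using parent_edge[OF w(1,2)] parent_in_V[OF w(1,2)] edge_sym unfolding nbrs_def by blast
    qed
  qed
  have disjoint: "?up \<inter> ?down = {}"
  proof (rule ccontr)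
    assume "?up \<inter> ?down \<noteq> {}"
    then obtain w y where "w \<in> V" "w \<noteq> r" "y \<in> V" "y \<noteq> r" "w = parent y" "parent w = y" by auto
    then show False using tree_dist_parent[of w] tree_dist_parent[of y] by simp
  qed
  have "inj_on (\<lambda>w. (w, parent w)) (V - {r})" "inj_on (\<lambda>w. (parent w, w)) (V - {r})"
    by (rule inj_onI, simp)+
  then have "card (Sigma V nbrs) = 2 * (card V - 1)"
    unfolding edges using finite_V root_in_V disjoint by (subst card_Un_disjoint) (auto simp: card_image)
  moreover have "card (Sigma V nbrs) = (\<Sum>w\<in>V. card (nbrs w))"
    using finite_V finite_nbrs by (simp add: card_SigmaI)
  ultimately show ?thesis using card_V_ge_1 by (simp add: of_nat_diff flip: of_nat_sum)
qed

definition deg :: "'a \<Rightarrow> real" where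
  "deg x = real (card (nbrs x)) + (if x = r then 2 else 0)"

definition edge_end_sum :: "('a \<Rightarrow> real) \<Rightarrow> 'a \<Rightarrow> real" where
  "edge_end_sum g x = (\<Sum>y\<in>nbrs x. g y) + (if x = r then 2 * g r else 0)"

lemma deg_pos: assumes "x \<in> V" shows "deg x > 0"
proof (cases "x = r")
  case False
  then have "parent x \<in> nbrs x" using parent_edge parent_in_V assms unfolding nbrs_def by blast
  then show ?thesis using finite_nbrs unfolding deg_def by (auto simp: card_gt_0_iff)
qed (simp add: deg_def)

lemma sum_deg: "(\<Sum>w\<in>V. deg w) = 2 * real (card V)"
  using sum_card_nbrs finite_V root_in_V unfolding deg_def by (simp add: sum.distrib)

lemma edge_end_sum_diff: "deg x * g x - edge_end_sum g x = (\<Sum>y\<in>nbrs x. g x - g y)"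
  unfolding deg_def edge_end_sum_def by (simp add: sum_subtractf algebra_simps)

lemma edge_end_sum_add_const: "edge_end_sum (\<lambda>a. c + g a) x = c * deg x + edge_end_sum g x"
  unfolding deg_def edge_end_sum_def by (simp add: sum.distrib algebra_simps)

lemma edge_end_sum_mono:
  assumes "\<And>y. y \<in> V \<Longrightarrow> g y \<le> h y" shows "edge_end_sum g x \<le> edge_end_sum h x"
proof -
  have "(\<Sum>y\<in>nbrs x. g y) \<le> (\<Sum>y\<in>nbrs x. h y)" using assms nbrs_subset by (blast intro: sum_mono)
  then show ?thesis using assms[OF root_in_V] unfolding edge_end_sum_def by auto
qed

lemma edge_ends_eq: "edge_ends V E r x = mset_set (nbrs x) + (if x = r then {#r, r#} else {#})"
  unfolding edge_ends_def nbrs_def by simp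

lemma set_pmf_srw_step: "x \<in> V \<Longrightarrow> set_pmf (srw_step V E r x) \<subseteq> V"
proof -
  assume "x \<in> V"
  then have "edge_ends V E r x \<noteq> {#}"
    using deg_pos[of x] finite_nbrs[of x] unfolding edge_ends_eq deg_def
    by (cases "x = r") (auto simp: mset_set_empty_iff)
  then show ?thesis
    unfolding srw_step_def edge_ends_eq using finite_nbrs nbrs_subset root_in_V by auto
qed

lemma expectation_srw_step:
  assumes x: "x \<in> V"
  shows "measure_pmf.expectation (srw_step V E r x) g = edge_end_sum g x / deg x"
proof -
  let ?M = "edge_ends V E r x"
  have size: "real (size ?M) = deg x" unfolding edge_ends_eq deg_def using finite_nbrs by simp
  then have "?M \<noteq> {#}" using deg_pos[OF x] by auto
  have count: "real (count ?M y) = (if y \<in> nbrs x then 1 else 0) + (if x = r \<and> y = r then 2 else 0)" for y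
    unfolding edge_ends_eq using finite_nbrs by auto
  have "measure_pmf.expectation (srw_step V E r x) g = (\<Sum>y\<in>V. pmf (srw_step V E r x) y *\<^sub>R g y)"
    by (rule integral_measure_pmf[OF finite_V]) (use set_pmf_srw_step[OF x] in blast)
  also have "\<dots> = (\<Sum>y\<in>V. ((if y \<in> nbrs x then g y else 0) + (if x = r \<and> y = r then 2 * g y else 0)) / deg x)"
    unfolding srw_step_def using \<open>?M \<noteq> {#}\<close> size by (intro sum.cong refl) (simp add: count divide_simps)
  also have "\<dots> = edge_end_sum g x / deg x"
    unfolding edge_end_sum_def using nbrs_subset finite_V root_in_V
    by (simp add: sum_divide_distrib[symmetric] sum.distrib sum.inter_restrict[symmetric] Int_absorb1)
  finally show ?thesis .
qed

definition visit_count :: "'a set \<Rightarrow> 'a list \<Rightarrow> real" where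
  "visit_count S p = real (length (filter (\<lambda>w. w \<in> S) p))"

definition visits :: "'a set \<Rightarrow> nat \<Rightarrow> 'a \<Rightarrow> real" where
  "visits S t x = measure_pmf.expectation (srw_traj V E r t x) (visit_count S)"

lemma visit_count_Cons: "visit_count S (x # p) = indicator S x + visit_count S p"
  unfolding visit_count_def by (simp add: indicator_def)

lemma finite_set_pmf_srw_traj: "x \<in> V \<Longrightarrow> finite (set_pmf (srw_traj V E r t x))"
proof (induction t arbitrary: x)
  case (Suc t)
  have "finite (set_pmf (srw_step V E r x))"
    using set_pmf_srw_step[OF Suc.prems] finite_V finite_subset by blast
  moreover have "\<And>y. y \<in> set_pmf (srw_step V E r x) \<Longrightarrow> finite (set_pmf (srw_traj V E r t y))"
    using Suc.IH set_pmf_srw_step[OF Suc.prems] by blast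
  ultimately show ?case by simp
qed simp

lemma visits_0: "visits S 0 x = indicator S x"
  unfolding visits_def by (simp add: visit_count_Cons visit_count_def)

lemma visits_Suc:
  assumes x: "x \<in> V"
  shows "visits S (Suc t) x = edge_end_sum (\<lambda>a. indicator S x + visits S t a) x / deg x"
proof -
  have after_step: "measure_pmf.expectation (map_pmf ((#) x) (srw_traj V E r t a)) (visit_count S)
      = indicator S x + visits S t a" if a: "a \<in> V" for a
  proof -
    have "measure_pmf.expectation (map_pmf ((#) x) (srw_traj V E r t a)) (visit_count S)
        = measure_pmf.expectation (srw_traj V E r t a) (\<lambda>p. indicator S x + visit_count S p)"
      by (simp add: visit_count_Cons)
    also have "\<dots> = indicator S x + visits S t a"
      unfolding visits_def
      by (subst Bochner_Integration.integral_add)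
        (simp_all add: integrable_measure_pmf_finite finite_set_pmf_srw_traj[OF a])
    finally show ?thesis .
  qed
  have "visits S (Suc t) x = (\<Sum>a\<in>V. pmf (srw_step V E r x) a *\<^sub>R
      measure_pmf.expectation (map_pmf ((#) x) (srw_traj V E r t a)) (visit_count S))"
    unfolding visits_def srw_traj.simps
    by (rule pmf_expectation_bind[OF finite_V _ set_pmf_srw_step[OF x]]) (simp add: finite_set_pmf_srw_traj)
  also have "\<dots> = (\<Sum>a\<in>V. pmf (srw_step V E r x) a *\<^sub>R (indicator S x + visits S t a))"
    using after_step by (intro sum.cong refl) simp
  also have "\<dots> = measure_pmf.expectation (srw_step V E r x) (\<lambda>a. indicator S x + visits S t a)"
    by (rule integral_measure_pmf[OF finite_V, symmetric]) (use set_pmf_srw_step[OF x] in blast)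
  also have "\<dots> = edge_end_sum (\<lambda>a. indicator S x + visits S t a) x / deg x"
    by (rule expectation_srw_step[OF x])
  finally show ?thesis .
qed

lemma visits_le_by_drift:
  fixes f :: "'a \<Rightarrow> real"
  assumes lower: "\<And>x. x \<in> V \<Longrightarrow> L \<le> f x"
    and drift: "\<And>x. x \<in> V \<Longrightarrow> edge_end_sum f x \<le> deg x * (f x - indicator S x + A)"
    and x: "x \<in> V"
  shows "visits S t x \<le> (real t + 1) * A + f x - L"
  using x
proof (induction t arbitrary: x)
  case 0
  have "deg x * L = edge_end_sum (\<lambda>a. L) x" by (simp add: edge_end_sum_def deg_def algebra_simps)
  also have "\<dots> \<le> edge_end_sum f x" by (rule edge_end_sum_mono) (rule lower)
  also have "\<dots> \<le> deg x * (f x - indicator S x + A)" using drift[OF 0] .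
  finally have "L \<le> f x - indicator S x + A" using deg_pos[OF 0] by simp
  then show ?case using visits_0[of S x] by simp
next
  case (Suc t)
  let ?c = "indicator S x + (real t + 1) * A - L"
  have "edge_end_sum (\<lambda>a. indicator S x + visits S t a) x \<le> edge_end_sum (\<lambda>a. ?c + f a) x"
  proof (rule edge_end_sum_mono)
    fix y assume "y \<in> V"
    then show "indicator S x + visits S t y \<le> ?c + f y" using Suc.IH[of y] by linarith
  qed
  also have "\<dots> = ?c * deg x + edge_end_sum f x" by (rule edge_end_sum_add_const)
  also have "\<dots> \<le> ?c * deg x + deg x * (f x - indicator S x + A)"
    using drift[OF Suc.prems] by simp
  finally have "edge_end_sum (\<lambda>a. indicator S x + visits S t a) x / deg x
      \<le> (real (Suc t) + 1) * A + f x - L"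
    using deg_pos[OF Suc.prems] by (simp add: divide_simps algebra_simps)
  then show ?case using visits_Suc[OF Suc.prems] by simp
qed

lemma visits_le: assumes "x \<in> V" shows "visits S t x \<le> real t + 1"
proof -
  have "visits S t x \<le> (real t + 1) * 1 + 0 - 0"
  proof (rule visits_le_by_drift[where f = "\<lambda>_. 0"])
    fix y assume "y \<in> V"
    have "0 \<le> deg y * (1 - indicator S y)"
      using deg_pos[OF \<open>y \<in> V\<close>] by (simp add: indicator_def)
    then show "edge_end_sum (\<lambda>_. 0) y \<le> deg y * (0 - indicator S y + 1)"
      by (cases "y = r") (simp_all add: edge_end_sum_def)
  qed (use assms in simp_all)
  then show ?thesis by simp
qed

subsection \<open>The hitting-time potential\<close>

definition gromov_prod :: "'a \<Rightarrow> 'a \<Rightarrow> 'a \<Rightarrow> real" where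
  "gromov_prod v x w = (real (tree_dist x v) + real (tree_dist w v) - real (tree_dist x w)) / 2"

text \<open>\<open>hit_pot v x\<close> is the expected hitting time of \<open>v\<close> from \<open>x\<close>, as the equations
  \<open>sum_nbrs_hit_pot_diff\<close> and \<open>hit_pot_self\<close> show.\<close>

definition hit_pot :: "'a \<Rightarrow> 'a \<Rightarrow> real" where
  "hit_pot v x = (\<Sum>w\<in>V. deg w * gromov_prod v x w)"

lemma gromov_prod_nonneg: "x \<in> V \<Longrightarrow> v \<in> V \<Longrightarrow> w \<in> V \<Longrightarrow> 0 \<le> gromov_prod v x w"
  unfolding gromov_prod_def using tree_dist_triangle[of x v w] by simp

lemma gromov_prod_le: "x \<in> V \<Longrightarrow> v \<in> V \<Longrightarrow> w \<in> V \<Longrightarrow> gromov_prod v x w \<le> real (card V) - 1"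
  unfolding gromov_prod_def using tree_dist_le_card[of x v] tree_dist_le_card[of w v] card_V_ge_1
  by (simp add: of_nat_diff)

lemma sum_nbrs_gromov_prod_diff:
  assumes "x \<in> V" "v \<in> V" "w \<in> V"
  shows "(\<Sum>y\<in>nbrs x. gromov_prod v x w - gromov_prod v y w)
           = (if x = v then (if w = v then 0 else -1) else (if w = x then 1 else 0))"
proof -
  have "(\<Sum>y\<in>nbrs x. gromov_prod v x w - gromov_prod v y w)
      = ((\<Sum>y\<in>nbrs x. real (tree_dist x v) - real (tree_dist y v))
         - (\<Sum>y\<in>nbrs x. real (tree_dist x w) - real (tree_dist y w))) / 2"
    unfolding gromov_prod_def sum_subtractf[symmetric] sum_divide_distrib
    by (intro sum.cong refl) (simp add: field_simps)
  then show ?thesis using sum_nbrs_tree_dist_diff assms by auto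
qed

lemma sum_nbrs_hit_pot_diff:
  assumes x: "x \<in> V" and v: "v \<in> V"
  shows "(\<Sum>y\<in>nbrs x. hit_pot v x - hit_pot v y) = (if x = v then deg v - 2 * real (card V) else deg x)"
proof -
  have "(\<Sum>y\<in>nbrs x. hit_pot v x - hit_pot v y)
      = (\<Sum>w\<in>V. deg w * (\<Sum>y\<in>nbrs x. gromov_prod v x w - gromov_prod v y w))"
    unfolding hit_pot_def sum_subtractf[symmetric] right_diff_distrib[symmetric] sum_distrib_left
    by (rule sum.swap)
  also have "\<dots> = (\<Sum>w\<in>V. deg w * (if x = v then (if w = v then 0 else -1) else (if w = x then 1 else 0)))"
    using sum_nbrs_gromov_prod_diff[OF x v] by simp
  also have "\<dots> = (if x = v then deg v - 2 * real (card V) else deg x)"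
  proof (cases "x = v")
    case True
    have "(\<Sum>w\<in>V. deg w * (if w = v then 0 else -1)) = deg v - (\<Sum>w\<in>V. deg w)"
      using sum.remove[OF finite_V v, of deg] sum.remove[OF finite_V v, of "\<lambda>w. deg w * (if w = v then 0 else -1)"]
      by (simp add: sum_negf)
    then show ?thesis using True sum_deg by simp
  next
    case False
    have "(\<Sum>w\<in>V. deg w * (if w = x then 1 else 0)) = deg x"
      using finite_V x by (simp add: sum.delta' if_distrib cong: if_cong)
    then show ?thesis using False by simp
  qed
  finally show ?thesis .
qed

lemma hit_pot_self: "v \<in> V \<Longrightarrow> hit_pot v v = 0"
  unfolding hit_pot_def gromov_prod_def using tree_dist_sym by (simp add: tree_dist_refl)

lemma hit_pot_nonneg: "x \<in> V \<Longrightarrow> v \<in> V \<Longrightarrow> 0 \<le> hit_pot v x"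
  unfolding hit_pot_def using deg_pos gromov_prod_nonneg by (intro sum_nonneg) (simp add: less_imp_le)

lemma hit_pot_le:
  assumes "x \<in> V" "v \<in> V" shows "hit_pot v x \<le> 2 * real (card V) * (real (card V) - 1)"
proof -
  have "hit_pot v x \<le> (\<Sum>w\<in>V. deg w * (real (card V) - 1))"
    unfolding hit_pot_def using assms deg_pos gromov_prod_le
    by (intro sum_mono mult_left_mono) (simp_all add: less_imp_le)
  also have "\<dots> = 2 * real (card V) * (real (card V) - 1)"
    using sum_deg by (simp add: sum_distrib_right[symmetric])
  finally show ?thesis .
qed

lemma subtree_root: "subtree V E r r = V"
proof -
  have "r \<in> set p" if "simple_path E p w r" for p w
    using simple_pathD[OF that] last_in_set by metis
  then show ?thesis unfolding subtree_def by blast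
qed

end

subsection \<open>The subtree \<open>T(v)\<close>\<close>

locale rooted_subtree = rooted_tree +
  fixes v :: 'a
  assumes v_in_V: "v \<in> V" and v_ne_root: "v \<noteq> r"
begin

definition Tv :: "'a set" where
  "Tv = subtree V E r v"

lemma mem_Tv_iff: "w \<in> Tv \<longleftrightarrow> w \<in> V \<and> v \<in> set (tree_path w r)"
  unfolding Tv_def subtree_def using simple_path_tree_path tree_path_eqI root_in_V by blast

lemma Tv_subset: "Tv \<subseteq> V"
  using mem_Tv_iff by blast

lemma finite_Tv: "finite Tv"
  using Tv_subset finite_V finite_subset by blast

lemma root_notin_Tv: "r \<notin> Tv"
  using mem_Tv_iff tree_path_refl[OF root_in_V] v_ne_root by simp

lemma v_in_Tv: "v \<in> Tv"
  using mem_Tv_iff v_in_V tree_path_parent[OF v_in_V v_ne_root] by simp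

lemma card_Tv_pos: "card Tv > 0"
  using v_in_Tv finite_Tv card_gt_0_iff by blast

lemma mem_Tv_iff_parent: "y \<in> V \<Longrightarrow> y \<noteq> r \<Longrightarrow> y \<in> Tv \<longleftrightarrow> y = v \<or> parent y \<in> Tv"
  using tree_path_parent parent_in_V mem_Tv_iff by auto

lemma parent_v_notin_Tv: "parent v \<notin> Tv"
proof
  assume "parent v \<in> Tv"
  then have "v \<in> set (tree_path (parent v) r)" using mem_Tv_iff by blast
  then show False
    using simple_pathD[OF simple_path_tree_path[OF v_in_V root_in_V]]
      tree_path_parent[OF v_in_V v_ne_root] by simp
qed

lemma edge_from_Tv: assumes "x \<in> Tv" "x \<noteq> v" "E x y" shows "y \<in> Tv"
proof -
  have "x \<in> V" "x \<noteq> r" "y \<in> V" using assms(1,3) Tv_subset root_notin_Tv edge_in_V by blast+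
  then show ?thesis using edge_parent_cases[OF assms(3)] mem_Tv_iff_parent assms(1,2) by blast
qed

lemma edge_into_Tv: "x \<notin> Tv \<Longrightarrow> E x y \<Longrightarrow> y \<in> Tv \<Longrightarrow> y = v"
  using edge_from_Tv edge_sym by blast

lemma edge_from_v: assumes "E v y" "y \<noteq> parent v" shows "y \<in> Tv"
proof -
  have "y \<in> V" using edge_in_V assms(1) by blast
  then show ?thesis
    using edge_parent_cases[OF assms(1)] assms(2) mem_Tv_iff_parent v_in_Tv by blast
qed

lemma sum_card_nbrs_Tv: "(\<Sum>w\<in>Tv. real (card (nbrs w))) \<le> 2 * real (card Tv) - 1"
proof -
  let ?up = "(\<lambda>w. (w, parent w)) ` Tv" and ?down = "(\<lambda>w. (parent w, w)) ` (Tv - {v})"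
  have "Sigma Tv nbrs \<subseteq> ?up \<union> ?down"
  proof
    fix q assume "q \<in> Sigma Tv nbrs"
    then obtain w y where q: "q = (w, y)" "w \<in> Tv" "E w y" unfolding nbrs_def by blast
    have "y \<in> V" using edge_in_V q(3) by blast
    with edge_parent_cases[OF q(3)] show "q \<in> ?up \<union> ?down"
      using q mem_Tv_iff_parent parent_v_notin_Tv by blast
  qed
  then have "card (Sigma Tv nbrs) \<le> card ?up + card ?down"
    using finite_Tv by (meson card_Un_le card_mono finite_Diff finite_UnI finite_imageI le_trans)
  also have "\<dots> \<le> card Tv + card (Tv - {v})"
    using finite_Tv by (intro add_mono card_image_le) auto
  also have "card (Tv - {v}) = card Tv - 1" using v_in_Tv finite_Tv by simp
  finally have "card (Sigma Tv nbrs) \<le> card Tv + (card Tv - 1)" .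
  moreover have "card (Sigma Tv nbrs) = (\<Sum>w\<in>Tv. card (nbrs w))"
    using finite_Tv finite_nbrs by (simp add: card_SigmaI)
  ultimately show ?thesis using card_Tv_pos by (simp add: of_nat_diff flip: of_nat_sum)
qed

lemma tree_dist_parent_v_imp_in_Tv:
  "w \<in> V \<Longrightarrow> tree_dist w (parent v) = Suc (tree_dist w v) \<Longrightarrow> w \<in> Tv"
proof (induction "tree_dist w v" arbitrary: w)
  case 0
  then show ?case using tree_dist_eq_0_imp_eq[of w v] v_in_V v_in_Tv by simp
next
  case (Suc m)
  then have "w \<noteq> v" using tree_dist_refl[OF v_in_V] by auto
  define w' where "w' = next_hop w v"
  have w': "w' \<in> V" "E w w'" "tree_dist w v = Suc (tree_dist w' v)"
    unfolding w'_def using next_hop_in_V next_hop_edge tree_dist_next_hop Suc.prems(1) v_in_V \<open>w \<noteq> v\<close>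
    by blast+
  have pv: "E (parent v) v" "parent v \<in> V"
    using edge_sym parent_edge parent_in_V v_in_V v_ne_root by blast+
  have "tree_dist w' (parent v) = Suc (tree_dist w' v)"
    using tree_dist_edge_le[OF w'(2) pv(2)] tree_dist_edge_cases[OF pv(1) w'(1)]
      tree_dist_sym[OF w'(1) pv(2)] tree_dist_sym[OF w'(1) v_in_V] w'(3) Suc.prems(2)
    by (metis Suc_le_mono le_SucI not_less_eq_eq)
  then have "w' \<in> Tv" using Suc.hyps w' by simp
  moreover have "w \<noteq> parent v" using Suc.prems(2) tree_dist_refl[OF pv(2)] by auto
  ultimately show ?case
    using edge_from_Tv edge_from_v edge_sym[OF w'(2)] by (cases "w' = v") auto
qed

lemma gromov_prod_parent_v: assumes "w \<in> V" "w \<notin> Tv" shows "gromov_prod v (parent v) w = 1"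
proof -
  have pv: "E (parent v) v" "parent v \<in> V"
    using edge_sym parent_edge parent_in_V v_in_V v_ne_root by blast+
  have "tree_dist w v = Suc (tree_dist w (parent v))"
    using tree_dist_parent_v_imp_in_Tv tree_dist_edge_cases[OF pv(1) assms(1)] assms
      tree_dist_sym[OF assms(1)] pv(2) v_in_V by metis
  then show ?thesis
    unfolding gromov_prod_def using tree_dist_edge[OF pv(1)] tree_dist_sym[OF assms(1) pv(2)] by simp
qed

lemma hit_pot_parent_v_ge: "hit_pot v (parent v) \<ge> 2 * real (card V) - (2 * real (card Tv) - 1)"
proof -
  have pv: "parent v \<in> V" using parent_in_V v_in_V v_ne_root by blast
  have "(\<Sum>w\<in>V - Tv. deg w) = (\<Sum>w\<in>V - Tv. deg w * gromov_prod v (parent v) w)"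
    by (intro sum.cong refl) (simp add: gromov_prod_parent_v)
  also have "\<dots> \<le> hit_pot v (parent v)" unfolding hit_pot_def
  proof (rule sum_mono2[OF finite_V])
    fix w assume "w \<in> V - (V - Tv)"
    then show "0 \<le> deg w * gromov_prod v (parent v) w"
      using deg_pos gromov_prod_nonneg[OF pv v_in_V] by (simp add: less_imp_le)
  qed auto
  finally have "(\<Sum>w\<in>V - Tv. deg w) \<le> hit_pot v (parent v)" .
  moreover have "(\<Sum>w\<in>V - Tv. deg w) = 2 * real (card V) - (\<Sum>w\<in>Tv. deg w)"
    using sum_deg Tv_subset finite_V by (simp add: sum_diff)
  moreover have "(\<Sum>w\<in>Tv. deg w) = (\<Sum>w\<in>Tv. real (card (nbrs w)))"
    unfolding deg_def using root_notin_Tv by (intro sum.cong refl) auto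
  ultimately show ?thesis using sum_card_nbrs_Tv by linarith
qed

subsection \<open>The drift function\<close>

definition rate :: real where
  "rate = real (card Tv) / (real (card V) - 1)"

definition drift_pot :: "'a \<Rightarrow> real" where
  "drift_pot x = (indicator Tv x - rate) * hit_pot v x"

lemma card_Tv_le: "card Tv \<le> card V - 1"
proof -
  have "Tv \<subseteq> V - {r}" using Tv_subset root_notin_Tv by blast
  then show ?thesis using finite_V root_in_V card_mono[of "V - {r}" Tv] by simp
qed

lemma card_V_gt_1: "real (card V) > 1"
  using card_Tv_le card_Tv_pos by linarith

lemma rate_nonneg: "0 \<le> rate"
  unfolding rate_def using card_V_gt_1 by simp

lemma rate_le_1: "rate \<le> 1"
  unfolding rate_def using card_V_gt_1 card_Tv_le card_V_ge_1 by (simp add: of_nat_diff)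

lemma two_card_Tv_le_rate: "2 * real (card Tv) \<le> rate * (2 * real (card V))"
proof -
  have "2 * real (card Tv) * (real (card V) - 1) \<le> real (card Tv) * (2 * real (card V))"
    by (simp add: algebra_simps)
  then show ?thesis unfolding rate_def using card_V_gt_1 by (simp add: divide_simps)
qed

lemma drift_pot_v: "drift_pot v = 0"
  unfolding drift_pot_def using hit_pot_self[OF v_in_V] by simp

lemma sum_nbrs_drift_pot_diff_v:
  "deg v * (1 - rate) \<le> (\<Sum>y\<in>nbrs v. drift_pot v - drift_pot y)"
proof -
  have pv: "parent v \<in> nbrs v"
    using parent_edge parent_in_V v_in_V v_ne_root unfolding nbrs_def by blast
  have drift_pot_nbr: "drift_pot y = (1 - rate) * hit_pot v y - (if y = parent v then hit_pot v y else 0)"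
    if "y \<in> nbrs v" for y
  proof (cases "y = parent v")
    case False
    then have "y \<in> Tv" using edge_from_v that unfolding nbrs_def by blast
    then show ?thesis unfolding drift_pot_def using False by simp
  next
    case True
    then show ?thesis unfolding drift_pot_def using parent_v_notin_Tv by (simp add: left_diff_distrib)
  qed
  have "(\<Sum>y\<in>nbrs v. hit_pot v y) = 2 * real (card V) - deg v"
    using sum_nbrs_hit_pot_diff[OF v_in_V v_in_V] hit_pot_self[OF v_in_V] by (simp add: sum_negf)
  have "(\<Sum>y\<in>nbrs v. drift_pot y)
      = (\<Sum>y\<in>nbrs v. (1 - rate) * hit_pot v y - (if y = parent v then hit_pot v y else 0))"
    using drift_pot_nbr by (rule sum.cong[OF refl])
  also have "\<dots> = (1 - rate) * (2 * real (card V) - deg v) - hit_pot v (parent v)"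
    using pv finite_nbrs \<open>(\<Sum>y\<in>nbrs v. hit_pot v y) = _\<close>
    by (simp add: sum_subtractf sum_distrib_left[symmetric])
  finally have "(\<Sum>y\<in>nbrs v. drift_pot v - drift_pot y)
      = hit_pot v (parent v) - (1 - rate) * (2 * real (card V) - deg v)"
    using drift_pot_v by (simp add: sum_negf)
  moreover have "(1 - rate) * (2 * real (card V)) \<le> hit_pot v (parent v)"
    using hit_pot_parent_v_ge two_card_Tv_le_rate by (simp add: algebra_simps)
  moreover have "deg v * (1 - rate) = (1 - rate) * (2 * real (card V)) - (1 - rate) * (2 * real (card V) - deg v)"
    by (simp add: algebra_simps)
  ultimately show ?thesis by linarith
qed

lemma sum_nbrs_drift_pot_diff_Tv:
  assumes "x \<in> Tv" "x \<noteq> v"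
  shows "(\<Sum>y\<in>nbrs x. drift_pot x - drift_pot y) = (1 - rate) * deg x"
proof -
  have x: "x \<in> V" using assms(1) Tv_subset by blast
  have "(\<Sum>y\<in>nbrs x. drift_pot x - drift_pot y) = (\<Sum>y\<in>nbrs x. (1 - rate) * (hit_pot v x - hit_pot v y))"
    using edge_from_Tv[OF assms] assms(1) unfolding nbrs_def drift_pot_def
    by (intro sum.cong refl) (simp add: algebra_simps)
  also have "\<dots> = (1 - rate) * deg x"
    using sum_nbrs_hit_pot_diff[OF x v_in_V] assms(2) by (simp add: sum_distrib_left[symmetric])
  finally show ?thesis .
qed

lemma sum_nbrs_drift_pot_diff_outside:
  assumes "x \<in> V" "x \<notin> Tv"
  shows "(\<Sum>y\<in>nbrs x. drift_pot x - drift_pot y) = - rate * deg x"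
proof -
  have "drift_pot y = - rate * hit_pot v y" if "y \<in> nbrs x" for y
  proof (cases "y \<in> Tv")
    case True
    then have "y = v" using edge_into_Tv[OF assms(2)] that unfolding nbrs_def by blast
    then show ?thesis using drift_pot_v hit_pot_self[OF v_in_V] by simp
  qed (simp add: drift_pot_def)
  then have "(\<Sum>y\<in>nbrs x. drift_pot x - drift_pot y) = (\<Sum>y\<in>nbrs x. - rate * (hit_pot v x - hit_pot v y))"
    using assms(2) unfolding drift_pot_def by (intro sum.cong refl) (simp add: algebra_simps)
  also have "\<dots> = - rate * (\<Sum>y\<in>nbrs x. hit_pot v x - hit_pot v y)"
    by (simp add: sum_distrib_left)
  also have "\<dots> = - rate * deg x"
    using sum_nbrs_hit_pot_diff[OF assms(1) v_in_V] assms v_in_Tv by auto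
  finally show ?thesis .
qed

lemma edge_end_sum_drift_pot:
  assumes "x \<in> V"
  shows "edge_end_sum drift_pot x \<le> deg x * (drift_pot x - indicator Tv x + rate)"
proof -
  consider "x = v" | "x \<in> Tv" "x \<noteq> v" | "x \<notin> Tv" by blast
  then have "deg x * (indicator Tv x - rate) \<le> (\<Sum>y\<in>nbrs x. drift_pot x - drift_pot y)"
  proof cases
    case 1
    then show ?thesis using sum_nbrs_drift_pot_diff_v v_in_Tv by simp
  next
    case 2
    then show ?thesis using sum_nbrs_drift_pot_diff_Tv[OF 2] by (simp add: algebra_simps)
  next
    case 3
    then show ?thesis using sum_nbrs_drift_pot_diff_outside[OF assms 3] by simp
  qed
  then show ?thesis using edge_end_sum_diff[of x drift_pot] by (simp add: algebra_simps)
qed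

lemma drift_pot_ge: assumes "x \<in> V" shows "- (2 * real (card V) * real (card Tv)) \<le> drift_pot x"
proof (cases "x \<in> Tv")
  case True
  have "0 \<le> (1 - rate) * hit_pot v x" using rate_le_1 hit_pot_nonneg[OF assms v_in_V] by simp
  then show ?thesis unfolding drift_pot_def using True by (simp add: order_trans[of _ 0])
next
  case False
  have "rate * hit_pot v x \<le> rate * (2 * real (card V) * (real (card V) - 1))"
    using hit_pot_le[OF assms v_in_V] rate_nonneg by (rule mult_left_mono)
  also have "\<dots> = 2 * real (card V) * real (card Tv)"
    unfolding rate_def using card_V_gt_1 by (simp add: divide_simps)
  finally show ?thesis using False unfolding drift_pot_def by simp
qed

lemma visits_Tv_le:
  "visits Tv t v \<le> real (card Tv) * ((real t + 3) / (real (card V) - 1) + 48 * real (card V))"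
proof -
  have "visits Tv t v \<le> (real t + 1) * rate + drift_pot v + 2 * real (card V) * real (card Tv)"
    using visits_le_by_drift[OF drift_pot_ge edge_end_sum_drift_pot v_in_V] by simp
  also have "\<dots> \<le> (real t + 3) * rate + 48 * real (card V) * real (card Tv)"
  proof -
    have "(real t + 1) * rate \<le> (real t + 3) * rate" using rate_nonneg by (simp add: mult_right_mono)
    moreover have "0 \<le> real (card V) * real (card Tv)" by simp
    ultimately show ?thesis using drift_pot_v by linarith
  qed
  also have "\<dots> = real (card Tv) * ((real t + 3) / (real (card V) - 1) + 48 * real (card V))"
    unfolding rate_def by (simp add: algebra_simps)
  finally show ?thesis .
qed

end

theorem corollary5p5:
  fixes V :: "'a set" and E :: "'a \<Rightarrow> 'a \<Rightarrow> bool" and r v :: 'a and t :: nat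
  assumes "is_tree V E" and "r \<in> V" and "card V \<ge> 2" and "v \<in> V"
  shows "expected_visits V E r v t
           \<le> real (card (subtree V E r v)) *
              ((real t + 3) / (real (card V) - 1) + 48 * real (card V))"
proof -
  interpret rooted_tree V E r using assms(1,2) by unfold_locales
  have visits: "expected_visits V E r v t = visits (subtree V E r v) t v"
    unfolding expected_visits_def visits_def visit_count_def ..
  show ?thesis
  proof (cases "v = r")
    case False
    interpret rooted_subtree V E r v using assms(4) False by unfold_locales
    show ?thesis using visits_Tv_le unfolding visits Tv_def .
  next
    case True
    have "real (card V) > 1" using assms(3) by simp
    have "expected_visits V E r v t \<le> real t + 1"
      using visits_le[OF assms(4)] visits by simp
    also have "\<dots> \<le> real (card V) * ((real t + 3) / (real (card V) - 1))"
      using \<open>real (card V) > 1\<close> by (simp add: field_simps)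
    also have "\<dots> \<le> real (card V) * ((real t + 3) / (real (card V) - 1) + 48 * real (card V))"
      by (simp add: algebra_simps)
    finally show ?thesis using True subtree_root by simp
  qed
qed

end
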